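(* In the binary setting below, define $\mathrm{CL}_{\mathrm{induced}}:=-\mathbb{E}[\mathrm{Var}(S-C\mid S_B)]$ and $\mathrm{GL}_{\mathrm{induced}}:=\mathbb{E}[\mathrm{Var}(C\mid S_B)]$. Then $$\mathrm{CL}_{\mathrm{induced}}+\mathrm{GL}_{\mathrm{induced}}=\mathbb{E}\big[2\,\mathrm{Cov}(S,C\mid S_B)-\mathrm{Var}(S\mid S_B)\big],$$ and $$-\mathbb{E}\Big[\sqrt{\mathrm{Var}(S\mid S_B)}\big(2\sqrt{\mathrm{Var}(C\mid S_B)}+\sqrt{\mathrm{Var}(S\mid S_B)}\big)\Big]\le \mathrm{CL}_{\mathrm{induced}}+\mathrm{GL}_{\mathrm{induced}}\le \mathbb{E}\Big[\sqrt{\mathrm{Var}(S\mid S_B)}\big(2\sqrt{\mathrm{Var}(C\mid S_B)}-\sqrt{\mathrm{Var}(S\mid S_B)}\big)\Big].$$ If moreover $[0,1]$ is divided into $N$ equal-width bins, then $$-\tfrac1N\mathbb{E}\big[\sqrt{C_B(1-C_B)}\big]-\tfrac{1}{4N^2}\le \mathrm{CL}_{\mathrm{induced}}+\mathrm{GL}_{\mathrm{induced}}\le \tfrac1N\mathbb{E}\big[\sqrt{C_B(1-C_B)}\big].$$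
   Context: Binary setting: $(X,Y)$ jointly distributed with $Y\in\{0,1\}$; $Q:=P(Y=1\mid X)$; $S=f(X)\in[0,1]$ is a classifier's confidence score for the positive class; $C:=\mathbb{E}[Q\mid S]$. Given a partition of $[0,1]$ into bins $\mathcal{B}_1,\dots,\mathcal{B}_J$ (intervals), the binned score $S_B$ equals $\mathbb{E}[S\mid S\in\mathcal{B}_j]$ on $\{S\in\mathcal{B}_j\}$, and $C_B:=\mathbb{E}[Q\mid S_B]=\mathbb{E}[C\mid S_B]$. $\mathrm{Var}(\cdot\mid S_B)$ and $\mathrm{Cov}(\cdot,\cdot\mid S_B)$ denote ordinary conditional variance and covariance. "$N$ equal-width bins" means the bins are the intervals of length $1/N$ partitioning $[0,1]$. *)

theory Defs
  imports "HOL-Probability.Probability"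
begin

definition cond_var :: "'a measure \<Rightarrow> 'a measure \<Rightarrow> ('a \<Rightarrow> real) \<Rightarrow> 'a \<Rightarrow> real" where
  "cond_var M F Z = real_cond_exp M F (\<lambda>\<omega>. (Z \<omega> - real_cond_exp M F Z \<omega>)\<^sup>2)"

definition cond_cov :: "'a measure \<Rightarrow> 'a measure \<Rightarrow> ('a \<Rightarrow> real) \<Rightarrow> ('a \<Rightarrow> real) \<Rightarrow> 'a \<Rightarrow> real" where
  "cond_cov M F Z W = real_cond_exp M F
     (\<lambda>\<omega>. (Z \<omega> - real_cond_exp M F Z \<omega>) * (W \<omega> - real_cond_exp M F W \<omega>))"

definition post_Q :: "'a measure \<Rightarrow> 'x measure \<Rightarrow> ('a \<Rightarrow> 'x) \<Rightarrow> ('a \<Rightarrow> nat) \<Rightarrow> 'a \<Rightarrow> real" where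
  "post_Q M MX X Y = real_cond_exp M (vimage_algebra (space M) X MX)
     (\<lambda>\<omega>. if Y \<omega> = 1 then 1 else 0)"

definition calib_C :: "'a measure \<Rightarrow> ('a \<Rightarrow> real) \<Rightarrow> ('a \<Rightarrow> real) \<Rightarrow> 'a \<Rightarrow> real" where
  "calib_C M S Q = real_cond_exp M (vimage_algebra (space M) S borel) Q"

text \<open>Binned score: S_B = E[S | S \<in> B_j] on the event S \<in> B_j (bins B 0, ..., B (J-1)).\<close>
definition binned :: "'a measure \<Rightarrow> nat \<Rightarrow> (nat \<Rightarrow> real set) \<Rightarrow> ('a \<Rightarrow> real) \<Rightarrow> 'a \<Rightarrow> real" where
  "binned M J B S = (\<lambda>\<omega>. \<Sum>j<J. indicator (B j) (S \<omega>) *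
      ((\<integral>\<omega>'. S \<omega>' * indicator (B j) (S \<omega>') \<partial>M)
       / measure M {\<omega>'\<in>space M. S \<omega>' \<in> B j}))"

definition gen_sigma :: "'a measure \<Rightarrow> ('a \<Rightarrow> real) \<Rightarrow> 'a measure" where
  "gen_sigma M Z = vimage_algebra (space M) Z borel"

end

theory Submission
  imports Defs
begin

text \<open>
  Conditional variance is a quadratic form, so Var(S - C | F) = Var(S | F) + Var(C | F)
  - 2 Cov(S, C | F) almost everywhere; integrating gives the identity, and the conditional
  Cauchy-Schwarz inequality |Cov(S, C | F)| \<le> \<surd>Var(S | F) \<surd>Var(C | F) gives the two-sided bound.
  For N equal-width bins, S lies almost surely in [a, a + 1/N] with a = \<lfloor>N S_B\<rfloor> / N, a
  function of S_B. The Bhatia-Davis inequality Var(Z | F) \<le> (E[Z | F] - a)(b - E[Z | F]) for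
  F-measurable a \<le> Z \<le> b then yields Var(S | S_B) \<le> 1/(4N^2) and, since E[C | S_B] = C_B by
  the tower property, Var(C | S_B) \<le> C_B(1 - C_B).
\<close>

section \<open>Bounded random variables\<close>

text \<open>Every random variable in the argument is essentially bounded, so all the products met
  below are integrable and conditional expectations can be manipulated linearly.\<close>

definition bounded_rv :: "'a measure \<Rightarrow> ('a \<Rightarrow> real) \<Rightarrow> bool" where
  "bounded_rv M g \<longleftrightarrow> g \<in> borel_measurable M \<and> (\<exists>K. AE x in M. \<bar>g x\<bar> \<le> K)"

lemma bounded_rv_borel_measurable: "bounded_rv M g \<Longrightarrow> g \<in> borel_measurable M"
  unfolding bounded_rv_def by auto

lemma bounded_rvI:
  "g \<in> borel_measurable M \<Longrightarrow> (\<And>x. x \<in> space M \<Longrightarrow> \<bar>g x\<bar> \<le> K) \<Longrightarrow> bounded_rv M g"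
  unfolding bounded_rv_def by (blast intro: AE_I2)

lemma bounded_rv_unit_interval:
  assumes "g \<in> borel_measurable M" "AE x in M. g x \<in> {0..1}"
  shows "bounded_rv M g"
proof -
  have "AE x in M. \<bar>g x\<bar> \<le> 1" using assms(2) by eventually_elim auto
  then show ?thesis using assms(1) unfolding bounded_rv_def by blast
qed

lemma (in finite_measure) integrable_bounded_rv: "bounded_rv M g \<Longrightarrow> integrable M g"
  unfolding bounded_rv_def using integrable_const_bound[of g] by (auto simp: real_norm_def)

lemma bounded_rv_const: "bounded_rv M (\<lambda>x. c)"
  by (rule bounded_rvI[of _ _ "\<bar>c\<bar>"]) simp_all

lemma bounded_rv_add: "bounded_rv M g \<Longrightarrow> bounded_rv M h \<Longrightarrow> bounded_rv M (\<lambda>x. g x + h x)"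
  unfolding bounded_rv_def
proof (elim conjE exE, intro conjI)
  fix K L assume "g \<in> borel_measurable M" "h \<in> borel_measurable M"
    and "AE x in M. \<bar>g x\<bar> \<le> K" "AE x in M. \<bar>h x\<bar> \<le> L"
  then show "(\<lambda>x. g x + h x) \<in> borel_measurable M" "\<exists>K. AE x in M. \<bar>g x + h x\<bar> \<le> K"
    by (auto intro!: exI[of _ "K + L"] elim: AE_mp)
qed

lemma bounded_rv_mult: "bounded_rv M g \<Longrightarrow> bounded_rv M h \<Longrightarrow> bounded_rv M (\<lambda>x. g x * h x)"
  unfolding bounded_rv_def
proof (elim conjE exE, intro conjI)
  fix K L assume "g \<in> borel_measurable M" "h \<in> borel_measurable M"
    and K: "AE x in M. \<bar>g x\<bar> \<le> K" and L: "AE x in M. \<bar>h x\<bar> \<le> L"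
  then show "(\<lambda>x. g x * h x) \<in> borel_measurable M" by measurable
  have "AE x in M. \<bar>g x * h x\<bar> \<le> K * L"
    using K L by eventually_elim (auto simp: abs_mult intro: mult_mono)
  then show "\<exists>K. AE x in M. \<bar>g x * h x\<bar> \<le> K" by blast
qed

lemma bounded_rv_minus: "bounded_rv M g \<Longrightarrow> bounded_rv M (\<lambda>x. - g x)"
  using bounded_rv_mult[OF bounded_rv_const, of M g "-1"] by simp

lemma bounded_rv_diff: "bounded_rv M g \<Longrightarrow> bounded_rv M h \<Longrightarrow> bounded_rv M (\<lambda>x. g x - h x)"
  using bounded_rv_add[of M g "\<lambda>x. - h x"] bounded_rv_minus[of M h] by simp

lemma bounded_rv_power2: "bounded_rv M g \<Longrightarrow> bounded_rv M (\<lambda>x. (g x)\<^sup>2)"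
  using bounded_rv_mult[of M g g] by (simp add: power2_eq_square)

lemma bounded_rv_sqrt: "bounded_rv M g \<Longrightarrow> bounded_rv M (\<lambda>x. sqrt (g x))"
  unfolding bounded_rv_def
proof (elim conjE exE, intro conjI)
  fix K assume "g \<in> borel_measurable M" and K: "AE x in M. \<bar>g x\<bar> \<le> K"
  then show "(\<lambda>x. sqrt (g x)) \<in> borel_measurable M" by measurable
  have "\<bar>sqrt y\<bar> = sqrt \<bar>y\<bar>" for y :: real
    by (cases "y \<ge> 0") (auto simp flip: real_sqrt_minus)
  then have "AE x in M. \<bar>sqrt (g x)\<bar> \<le> sqrt K"
    using K by (auto elim!: AE_mp)
  then show "\<exists>K. AE x in M. \<bar>sqrt (g x)\<bar> \<le> K" by blast
qed

lemmas bounded_rv_intros =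
  bounded_rv_const bounded_rv_add bounded_rv_mult bounded_rv_minus bounded_rv_diff bounded_rv_power2 bounded_rv_sqrt

section \<open>Conditional variance and covariance\<close>

lemma abs_le_sqrt_mult_sqrt_if_quadratic_nonneg:
  fixes a b c :: real
  assumes b: "0 \<le> b" and quadratic: "\<forall>t\<in>\<rat>. 0 \<le> a - 2 * t * c + t\<^sup>2 * b"
  shows "\<bar>c\<bar> \<le> sqrt a * sqrt b"
proof -
  have nonneg: "0 \<le> a - 2 * t * c + t\<^sup>2 * b" for t
  proof -
    have "continuous_on (closure \<rat>) (\<lambda>t. a - 2 * t * c + t\<^sup>2 * b)"
      by (intro continuous_intros)
    then show ?thesis
      using continuous_ge_on_closure[of \<rat> "\<lambda>t. a - 2 * t * c + t\<^sup>2 * b" t 0] quadratic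
      by (auto simp: Rats_closure_real)
  qed
  have "c\<^sup>2 \<le> a * b"
  proof (cases "b = 0")
    case True
    show ?thesis
    proof (rule ccontr)
      assume "\<not> ?thesis"
      then have "c \<noteq> 0" using True by simp
      then show False
        using nonneg[of "(a + 1) / (2 * c)"] True by (simp add: field_simps)
    qed
  next
    case False
    then have "b > 0" using b by simp
    have "0 \<le> a - 2 * (c / b) * c + (c / b)\<^sup>2 * b" by (rule nonneg)
    also have "\<dots> = a - c\<^sup>2 / b" using \<open>b > 0\<close> by (simp add: field_simps power2_eq_square)
    finally show ?thesis using \<open>b > 0\<close> by (simp add: field_simps)
  qed
  then have "sqrt (c\<^sup>2) \<le> sqrt (a * b)" by (rule real_sqrt_le_mono)
  then show ?thesis by (simp add: real_sqrt_mult)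
qed

lemma mult_le_square_half_sum:
  fixes u v :: real
  shows "u * v \<le> ((u + v) / 2)\<^sup>2"
proof -
  have "((u + v) / 2)\<^sup>2 - u * v = ((u - v) / 2)\<^sup>2" by (simp add: power2_eq_square field_simps)
  then show ?thesis by (metis diff_ge_0_iff_ge zero_le_power2)
qed

context finite_measure_subalgebra
begin

lemma bounded_rv_real_cond_exp: "bounded_rv M g \<Longrightarrow> bounded_rv M (real_cond_exp M F g)"
proof -
  assume g: "bounded_rv M g"
  then obtain K where K: "AE x in M. \<bar>g x\<bar> \<le> K" unfolding bounded_rv_def by auto
  have "AE x in M. real_cond_exp M F g x \<le> K"
    by (rule real_cond_exp_le_c) (use g K in \<open>auto intro: integrable_bounded_rv\<close>)
  moreover have "AE x in M. - K \<le> real_cond_exp M F g x"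
    by (rule real_cond_exp_ge_c) (use g K in \<open>auto intro: integrable_bounded_rv\<close>)
  ultimately have "AE x in M. \<bar>real_cond_exp M F g x\<bar> \<le> K" by eventually_elim auto
  then show ?thesis unfolding bounded_rv_def by auto
qed

lemma bounded_rv_cond_var: "bounded_rv M Z \<Longrightarrow> bounded_rv M (cond_var M F Z)"
  unfolding cond_var_def by (intro bounded_rv_real_cond_exp bounded_rv_intros)

lemma bounded_rv_cond_cov: "bounded_rv M Z \<Longrightarrow> bounded_rv M W \<Longrightarrow> bounded_rv M (cond_cov M F Z W)"
  unfolding cond_cov_def by (intro bounded_rv_real_cond_exp bounded_rv_intros)

lemma cond_var_nonneg: "bounded_rv M Z \<Longrightarrow> AE x in M. 0 \<le> cond_var M F Z x"
  unfolding cond_var_def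
  by (intro real_cond_exp_pos AE_I2 zero_le_power2 bounded_rv_borel_measurable
      bounded_rv_intros bounded_rv_real_cond_exp)

lemma real_cond_exp_lincomb:
  assumes "integrable M f" "integrable M g" "integrable M h"
  shows "AE x in M. real_cond_exp M F (\<lambda>x. f x + s * g x + t * h x) x
    = real_cond_exp M F f x + s * real_cond_exp M F g x + t * real_cond_exp M F h x"
proof -
  have "AE x in M. real_cond_exp M F (\<lambda>x. f x + s * g x + t * h x) x
      = real_cond_exp M F (\<lambda>x. f x + s * g x) x + real_cond_exp M F (\<lambda>x. t * h x) x"
    using assms by (intro real_cond_exp_add) auto
  moreover have "AE x in M. real_cond_exp M F (\<lambda>x. f x + s * g x) x
      = real_cond_exp M F f x + real_cond_exp M F (\<lambda>x. s * g x) x"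
    using assms by (intro real_cond_exp_add) auto
  moreover have "AE x in M. real_cond_exp M F (\<lambda>x. s * g x) x = s * real_cond_exp M F g x"
    using assms by (intro real_cond_exp_cmult)
  moreover have "AE x in M. real_cond_exp M F (\<lambda>x. t * h x) x = t * real_cond_exp M F h x"
    using assms by (intro real_cond_exp_cmult)
  ultimately show ?thesis by eventually_elim simp
qed

lemma cond_var_diff_scaled:
  assumes Z: "bounded_rv M Z" and W: "bounded_rv M W"
  shows "AE x in M. cond_var M F (\<lambda>x. Z x - t * W x) x
    = cond_var M F Z x - 2 * t * cond_cov M F Z W x + t\<^sup>2 * cond_var M F W x"
proof -
  define D where "D x = Z x - real_cond_exp M F Z x" for x
  define E where "E x = W x - real_cond_exp M F W x" for x
  have D: "bounded_rv M D" and E: "bounded_rv M E"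
    unfolding D_def E_def using Z W by (auto intro!: bounded_rv_intros bounded_rv_real_cond_exp)
  note bounded_integrable = integrable_bounded_rv bounded_rv_intros
  have ZtW: "bounded_rv M (\<lambda>x. Z x - t * W x)" using Z W by (intro bounded_rv_intros)
  have "AE x in M. real_cond_exp M F (\<lambda>x. Z x - t * W x) x
      = real_cond_exp M F Z x - real_cond_exp M F (\<lambda>x. t * W x) x"
    using Z W by (intro real_cond_exp_diff bounded_integrable)
  moreover have "AE x in M. real_cond_exp M F (\<lambda>x. t * W x) x = t * real_cond_exp M F W x"
    using W by (intro real_cond_exp_cmult bounded_integrable)
  ultimately have "AE x in M. real_cond_exp M F (\<lambda>x. Z x - t * W x) x
      = real_cond_exp M F Z x - t * real_cond_exp M F W x"
    by eventually_elim simp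
  then have "AE x in M. (Z x - t * W x - real_cond_exp M F (\<lambda>x. Z x - t * W x) x)\<^sup>2
      = (D x)\<^sup>2 + (-2 * t) * (D x * E x) + t\<^sup>2 * (E x)\<^sup>2"
  proof eventually_elim
    case (elim x)
    show ?case unfolding elim D_def E_def by (simp add: power2_eq_square algebra_simps)
  qed
  then have "AE x in M. cond_var M F (\<lambda>x. Z x - t * W x) x
      = real_cond_exp M F (\<lambda>x. (D x)\<^sup>2 + (-2 * t) * (D x * E x) + t\<^sup>2 * (E x)\<^sup>2) x"
    unfolding cond_var_def
    by (rule real_cond_exp_cong) (use ZtW D E in \<open>auto intro!: bounded_rv_borel_measurable
        bounded_rv_intros bounded_rv_real_cond_exp\<close>)
  moreover have "AE x in M. real_cond_exp M F (\<lambda>x. (D x)\<^sup>2 + (-2 * t) * (D x * E x) + t\<^sup>2 * (E x)\<^sup>2) x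
      = real_cond_exp M F (\<lambda>x. (D x)\<^sup>2) x + (-2 * t) * real_cond_exp M F (\<lambda>x. D x * E x) x
        + t\<^sup>2 * real_cond_exp M F (\<lambda>x. (E x)\<^sup>2) x"
    using D E by (intro real_cond_exp_lincomb bounded_integrable)
  ultimately show ?thesis
    unfolding cond_var_def cond_cov_def D_def[symmetric] E_def[symmetric]
    by eventually_elim simp
qed

lemma cond_var_diff:
  assumes "bounded_rv M Z" and "bounded_rv M W"
  shows "AE x in M. cond_var M F (\<lambda>x. Z x - W x) x
    = cond_var M F Z x + cond_var M F W x - 2 * cond_cov M F Z W x"
  using cond_var_diff_scaled[OF assms, of 1] by eventually_elim simp

lemma cond_cov_abs_le:
  assumes Z: "bounded_rv M Z" and W: "bounded_rv M W"
  shows "AE x in M. \<bar>cond_cov M F Z W x\<bar> \<le> sqrt (cond_var M F Z x) * sqrt (cond_var M F W x)"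
proof -
  have "AE x in M. 0 \<le> cond_var M F Z x - 2 * t * cond_cov M F Z W x + t\<^sup>2 * cond_var M F W x"
    for t
  proof -
    have "bounded_rv M (\<lambda>x. Z x - t * W x)" using Z W by (intro bounded_rv_intros)
    from cond_var_nonneg[OF this] cond_var_diff_scaled[OF Z W, of t] show ?thesis
      by eventually_elim simp
  qed
  \<comment> \<open>Only countably many t, so that the exceptional null sets can be united.\<close>
  then have "AE x in M. \<forall>t\<in>\<rat>.
      0 \<le> cond_var M F Z x - 2 * t * cond_cov M F Z W x + t\<^sup>2 * cond_var M F W x"
    by (simp add: AE_ball_countable countable_rat)
  then show ?thesis
    using cond_var_nonneg[OF Z] cond_var_nonneg[OF W]
    by eventually_elim (rule abs_le_sqrt_mult_sqrt_if_quadratic_nonneg)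
qed

lemma real_cond_exp_unit_interval:
  assumes Z: "Z \<in> borel_measurable M" "AE x in M. Z x \<in> {0..1}"
  shows "bounded_rv M (real_cond_exp M F Z)" "AE x in M. real_cond_exp M F Z x \<in> {0..1}"
proof -
  have "bounded_rv M Z" using Z by (rule bounded_rv_unit_interval)
  then have "integrable M Z" by (rule integrable_bounded_rv)
  moreover have "AE x in M. 0 \<le> Z x" "AE x in M. Z x \<le> 1"
    using Z(2) by (eventually_elim, simp)+
  ultimately have "AE x in M. 0 \<le> real_cond_exp M F Z x" "AE x in M. real_cond_exp M F Z x \<le> 1"
    using real_cond_exp_ge_c real_cond_exp_le_c by blast+
  then show "AE x in M. real_cond_exp M F Z x \<in> {0..1}" by eventually_elim simp
  then show "bounded_rv M (real_cond_exp M F Z)" by (intro bounded_rv_unit_interval) simp_all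
qed

lemma cond_var_le_Bhatia_Davis:
  assumes Z: "bounded_rv M Z"
    and a: "bounded_rv M a" "a \<in> borel_measurable F"
    and b: "bounded_rv M b" "b \<in> borel_measurable F"
    and bracket: "AE x in M. a x \<le> Z x \<and> Z x \<le> b x"
  shows "AE x in M. cond_var M F Z x
    \<le> (real_cond_exp M F Z x - a x) * (b x - real_cond_exp M F Z x)"
proof -
  \<comment> \<open>With m = E[Z | F]: (Z - a)(b - Z) = (m - a)(b - m) + (a + b - 2m)(Z - m) - (Z - m)^2,
    and the middle term has conditional expectation 0 because a + b - 2m is F-measurable.\<close>
  define m where "m = real_cond_exp M F Z"
  define D where "D x = Z x - m x" for x
  define G where "G x = a x + b x - 2 * m x" for x
  define H where "H x = (m x - a x) * (b x - m x)" for x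
  note bounded_integrable = integrable_bounded_rv bounded_rv_intros
  have mF: "m \<in> borel_measurable F" unfolding m_def by simp
  have GF: "G \<in> borel_measurable F" and HF: "H \<in> borel_measurable F"
    unfolding G_def H_def using mF a(2) b(2) by measurable
  have m: "bounded_rv M m" unfolding m_def by (rule bounded_rv_real_cond_exp[OF Z])
  have D: "bounded_rv M D" and G: "bounded_rv M G" and H: "bounded_rv M H"
    unfolding D_def G_def H_def using Z a b m by (auto intro!: bounded_rv_intros)
  have "(\<lambda>x. (Z x - a x) * (b x - Z x)) = (\<lambda>x. H x + G x * D x - (D x)\<^sup>2)"
    by (simp add: H_def G_def D_def power2_eq_square algebra_simps)
  moreover have "AE x in M. 0 \<le> real_cond_exp M F (\<lambda>x. (Z x - a x) * (b x - Z x)) x"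
    using bracket Z a b
    by (intro real_cond_exp_pos bounded_rv_borel_measurable bounded_rv_intros) (auto elim!: AE_mp)
  ultimately have "AE x in M. 0 \<le> real_cond_exp M F (\<lambda>x. H x + G x * D x - (D x)\<^sup>2) x"
    by simp
  moreover have "AE x in M. real_cond_exp M F (\<lambda>x. H x + G x * D x - (D x)\<^sup>2) x
      = real_cond_exp M F (\<lambda>x. H x + G x * D x) x - real_cond_exp M F (\<lambda>x. (D x)\<^sup>2) x"
    using H G D by (intro real_cond_exp_diff bounded_integrable)
  moreover have "AE x in M. real_cond_exp M F (\<lambda>x. H x + G x * D x) x
      = real_cond_exp M F H x + real_cond_exp M F (\<lambda>x. G x * D x) x"
    using H G D by (intro real_cond_exp_add bounded_integrable)
  moreover have "AE x in M. real_cond_exp M F H x = H x"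
    using H HF by (intro real_cond_exp_F_meas bounded_integrable)
  moreover have "AE x in M. real_cond_exp M F (\<lambda>x. G x * D x) x = G x * real_cond_exp M F D x"
    using G D by (intro real_cond_exp_mult[OF GF] bounded_rv_borel_measurable bounded_integrable)
  moreover have "AE x in M. real_cond_exp M F D x = m x - real_cond_exp M F m x"
    using Z m unfolding D_def m_def by (intro real_cond_exp_diff bounded_integrable)
  moreover have "AE x in M. real_cond_exp M F m x = m x"
    using m mF by (intro real_cond_exp_F_meas bounded_integrable)
  ultimately show ?thesis
    unfolding cond_var_def m_def[symmetric] D_def[symmetric]
    by eventually_elim (simp add: H_def)
qed

lemma integral_cond_var_diff:
  assumes S: "bounded_rv M S" and C: "bounded_rv M C"
  shows "- (\<integral>x. cond_var M F (\<lambda>x. S x - C x) x \<partial>M) + (\<integral>x. cond_var M F C x \<partial>M)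
    = (\<integral>x. 2 * cond_cov M F S C x - cond_var M F S x \<partial>M)"
proof -
  note bounded_integrable =
    integrable_bounded_rv bounded_rv_intros bounded_rv_cond_var bounded_rv_cond_cov
  have "(\<integral>x. cond_var M F (\<lambda>x. S x - C x) x \<partial>M)
      = (\<integral>x. cond_var M F S x + cond_var M F C x - 2 * cond_cov M F S C x \<partial>M)"
    using S C cond_var_diff[OF S C]
    by (intro integral_cong_AE bounded_rv_borel_measurable bounded_integrable) auto
  then show ?thesis using S C by (simp add: bounded_integrable)
qed

lemma two_cond_cov_minus_cond_var_bounds:
  assumes S: "bounded_rv M S" and C: "bounded_rv M C"
  shows "AE x in M. - (sqrt (cond_var M F S x) * (2 * sqrt (cond_var M F C x) + sqrt (cond_var M F S x)))
      \<le> 2 * cond_cov M F S C x - cond_var M F S x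
    \<and> 2 * cond_cov M F S C x - cond_var M F S x
      \<le> sqrt (cond_var M F S x) * (2 * sqrt (cond_var M F C x) - sqrt (cond_var M F S x))"
  using cond_cov_abs_le[OF S C] cond_var_nonneg[OF S]
proof eventually_elim
  case (elim x)
  have "cond_var M F S x = sqrt (cond_var M F S x) * sqrt (cond_var M F S x)"
    using elim(2) by simp
  with elim(1) show ?case by (auto simp: abs_le_iff algebra_simps)
qed

lemma integral_two_cond_cov_minus_cond_var_bounds:
  assumes S: "bounded_rv M S" and C: "bounded_rv M C"
  shows "- (\<integral>x. sqrt (cond_var M F S x) * (2 * sqrt (cond_var M F C x) + sqrt (cond_var M F S x)) \<partial>M)
      \<le> (\<integral>x. 2 * cond_cov M F S C x - cond_var M F S x \<partial>M)" (is "?lower \<le> ?I")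
    and "(\<integral>x. 2 * cond_cov M F S C x - cond_var M F S x \<partial>M)
      \<le> (\<integral>x. sqrt (cond_var M F S x) * (2 * sqrt (cond_var M F C x) - sqrt (cond_var M F S x)) \<partial>M)"
      (is "_ \<le> ?upper")
proof -
  note bounded_integrable =
    integrable_bounded_rv bounded_rv_intros bounded_rv_cond_var bounded_rv_cond_cov
  note pointwise = two_cond_cov_minus_cond_var_bounds[OF S C]
  have "(\<integral>x. - (sqrt (cond_var M F S x) * (2 * sqrt (cond_var M F C x) + sqrt (cond_var M F S x))) \<partial>M)
      \<le> ?I"
    using pointwise S C by (intro integral_mono_AE bounded_integrable) (auto elim!: AE_mp)
  then show "?lower \<le> ?I" by simp
  show "?I \<le> ?upper"
    using pointwise S C by (intro integral_mono_AE bounded_integrable) (auto elim!: AE_mp)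
qed

lemma two_cond_cov_minus_cond_var_bracketed:
  assumes S: "bounded_rv M S" and a: "a \<in> borel_measurable F"
    and bracket: "AE x in M. a x \<le> S x \<and> S x \<le> a x + \<delta>" and "0 \<le> \<delta>"
    and C: "C \<in> borel_measurable M" "AE x in M. C x \<in> {0..1}"
    and CF: "AE x in M. real_cond_exp M F C x = CF x"
  shows "AE x in M. - \<delta> * sqrt (CF x * (1 - CF x)) - \<delta>\<^sup>2 / 4
      \<le> 2 * cond_cov M F S C x - cond_var M F S x
    \<and> 2 * cond_cov M F S C x - cond_var M F S x \<le> \<delta> * sqrt (CF x * (1 - CF x))"
proof -
  have C_bounded: "bounded_rv M C" using C by (rule bounded_rv_unit_interval)
  obtain K where K: "AE x in M. \<bar>S x\<bar> \<le> K" using S unfolding bounded_rv_def by blast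
  have "AE x in M. \<bar>a x\<bar> \<le> K + \<delta>" using K bracket by eventually_elim auto
  then have a_bounded: "bounded_rv M a"
    unfolding bounded_rv_def using measurable_from_subalg[OF subalg a] by blast
  have "AE x in M. cond_var M F S x
      \<le> (real_cond_exp M F S x - a x) * (a x + \<delta> - real_cond_exp M F S x)"
    using a a_bounded S bracket by (intro cond_var_le_Bhatia_Davis bounded_rv_intros) simp_all
  moreover have "AE x in M. cond_var M F C x
      \<le> (real_cond_exp M F C x - 0) * (1 - real_cond_exp M F C x)"
    using C C_bounded by (intro cond_var_le_Bhatia_Davis bounded_rv_const) (auto elim!: AE_mp)
  ultimately show ?thesis
    using CF cond_cov_abs_le[OF S C_bounded] cond_var_nonneg[OF S] cond_var_nonneg[OF C_bounded]
  proof eventually_elim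
    case (elim x)
    define v w where "v = cond_var M F S x" and "w = cond_var M F C x"
    have "v \<le> (\<delta> / 2)\<^sup>2"
      using elim(1) mult_le_square_half_sum[of "real_cond_exp M F S x - a x"
          "a x + \<delta> - real_cond_exp M F S x"]
      by (simp add: v_def)
    then have v: "sqrt v \<le> \<delta> / 2"
      using \<open>0 \<le> \<delta>\<close> real_sqrt_le_mono[of v "(\<delta> / 2)\<^sup>2"] by simp
    have w: "sqrt w \<le> sqrt (CF x * (1 - CF x))"
      unfolding w_def using elim(2,3) by (intro real_sqrt_le_mono) simp
    have "\<bar>cond_cov M F S C x\<bar> \<le> \<delta> / 2 * sqrt (CF x * (1 - CF x))"
      using elim(4,6) mult_mono[OF v w] \<open>0 \<le> \<delta>\<close> by (simp add: v_def w_def)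
    moreover have "v \<le> \<delta>\<^sup>2 / 4" using \<open>v \<le> (\<delta> / 2)\<^sup>2\<close> by (simp add: power_divide)
    moreover have "0 \<le> v" using elim(5) by (simp add: v_def)
    ultimately show ?case unfolding v_def abs_le_iff by linarith
  qed
qed

lemma integral_two_cond_cov_minus_cond_var_bracketed:
  assumes "prob_space M"
    and S: "bounded_rv M S" and a: "a \<in> borel_measurable F"
    and bracket: "AE x in M. a x \<le> S x \<and> S x \<le> a x + \<delta>" and "0 \<le> \<delta>"
    and C: "C \<in> borel_measurable M" "AE x in M. C x \<in> {0..1}"
    and CF: "CF \<in> borel_measurable M" "AE x in M. real_cond_exp M F C x = CF x"
  shows "- \<delta> * (\<integral>x. sqrt (CF x * (1 - CF x)) \<partial>M) - \<delta>\<^sup>2 / 4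
      \<le> (\<integral>x. 2 * cond_cov M F S C x - cond_var M F S x \<partial>M)" (is "?lower \<le> ?I")
    and "(\<integral>x. 2 * cond_cov M F S C x - cond_var M F S x \<partial>M)
      \<le> \<delta> * (\<integral>x. sqrt (CF x * (1 - CF x)) \<partial>M)" (is "_ \<le> ?upper")
proof -
  interpret prob_space M by fact
  note bounded_integrable =
    integrable_bounded_rv bounded_rv_intros bounded_rv_cond_var bounded_rv_cond_cov
  note pointwise = two_cond_cov_minus_cond_var_bracketed[OF S a bracket \<open>0 \<le> \<delta>\<close> C CF(2)]
  have C_bounded: "bounded_rv M C" using C by (rule bounded_rv_unit_interval)
  have "AE x in M. CF x \<in> {0..1}"
    using real_cond_exp_unit_interval(2)[OF C] CF(2) by eventually_elim simp
  then have CF_bounded: "bounded_rv M CF" using CF(1) by (intro bounded_rv_unit_interval)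
  have "(\<integral>x. - \<delta> * sqrt (CF x * (1 - CF x)) - \<delta>\<^sup>2 / 4 \<partial>M) \<le> ?I"
    using pointwise S C_bounded CF_bounded
    by (intro integral_mono_AE bounded_integrable) (auto elim!: AE_mp)
  then show "?lower \<le> ?I" using CF_bounded by (simp add: bounded_integrable prob_space)
  have "?I \<le> (\<integral>x. \<delta> * sqrt (CF x * (1 - CF x)) \<partial>M)"
    using pointwise S C_bounded CF_bounded
    by (intro integral_mono_AE bounded_integrable) (auto elim!: AE_mp)
  then show "?I \<le> ?upper" by simp
qed

end

section \<open>Binning\<close>

lemma subalgebra_vimage_algebra:
  "g \<in> measurable M N \<Longrightarrow> subalgebra M (vimage_algebra (space M) g N)"
  unfolding subalgebra_def by (simp add: sets_image_in_sets)

lemma (in finite_measure) finite_measure_subalgebra_vimage_algebra: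
  "g \<in> measurable M N \<Longrightarrow> finite_measure_subalgebra M (vimage_algebra (space M) g N)"
  by unfold_locales (rule subalgebra_vimage_algebra)

text \<open>The bin value E[S | S \<in> A] of \<^const>\<open>binned\<close>; division by zero makes it 0 on a
  null bin.\<close>

definition bin_mean :: "'a measure \<Rightarrow> real set \<Rightarrow> ('a \<Rightarrow> real) \<Rightarrow> real" where
  "bin_mean M A S =
    (\<integral>\<omega>. S \<omega> * indicator A (S \<omega>) \<partial>M) / measure M {\<omega>\<in>space M. S \<omega> \<in> A}"

lemma binned_eq_sum_bin_mean:
  "binned M J B S = (\<lambda>\<omega>. \<Sum>j<J. indicator (B j) (S \<omega>) * bin_mean M (B j) S)"
  unfolding binned_def bin_mean_def ..

lemma binned_eq_bin_mean:
  assumes "\<forall>i<J. \<forall>j<J. i \<noteq> j \<longrightarrow> B i \<inter> B j = {}" and "j < J" and "S \<omega> \<in> B j"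
  shows "binned M J B S \<omega> = bin_mean M (B j) S"
proof -
  have "binned M J B S \<omega> = (\<Sum>i<J. if i = j then bin_mean M (B i) S else 0)"
    unfolding binned_eq_sum_bin_mean using assms by (intro sum.cong) (auto simp: indicator_def)
  then show ?thesis using \<open>j < J\<close> by simp
qed

lemma (in finite_measure) bin_mean_in_bin_hull:
  assumes S: "S \<in> borel_measurable M" and A: "A \<in> sets borel" "A \<subseteq> {lo..hi}"
    and nonnull: "measure M {\<omega>\<in>space M. S \<omega> \<in> A} \<noteq> 0"
  shows "lo \<le> bin_mean M A S" "bin_mean M A S \<le> hi"
    and "bin_mean M A S = hi \<Longrightarrow> AE \<omega> in M. S \<omega> \<in> A \<longrightarrow> S \<omega> = hi"
proof -
  define N where "N = {\<omega>\<in>space M. S \<omega> \<in> A}"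
  define ind :: "'a \<Rightarrow> real" where "ind \<omega> = indicator A (S \<omega>)" for \<omega>
  define c where "c = bin_mean M A S"
  have N: "N \<in> sets M" unfolding N_def using S A(1) by measurable
  have ind: "integrable M ind" unfolding ind_def using S A(1)
    by (intro integrable_bounded_rv bounded_rvI[where K = 1]) (auto simp: indicator_def)
  have S_ind: "integrable M (\<lambda>\<omega>. S \<omega> * ind \<omega>)" unfolding ind_def
    using S A by (intro integrable_bounded_rv bounded_rvI[where K = "\<bar>lo\<bar> + \<bar>hi\<bar>"])
      (auto simp: indicator_def dest!: subsetD[OF A(2)])
  have bin: "lo * ind \<omega> \<le> S \<omega> * ind \<omega>" "S \<omega> * ind \<omega> \<le> hi * ind \<omega>" for \<omega>
    using A(2) by (auto simp: ind_def indicator_def)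
  have "(\<integral>\<omega>. ind \<omega> \<partial>M) = (\<integral>\<omega>. indicator N \<omega> \<partial>M)"
    by (rule Bochner_Integration.integral_cong) (auto simp: ind_def N_def indicator_def)
  also have "\<dots> = measure M N" using N by simp
  finally have int_ind: "(\<integral>\<omega>. ind \<omega> \<partial>M) = measure M N" .
  have p: "measure M N > 0" using nonnull measure_nonneg[of M N] unfolding N_def by linarith
  have c: "c * measure M N = (\<integral>\<omega>. S \<omega> * ind \<omega> \<partial>M)"
    using p by (simp add: c_def bin_mean_def ind_def N_def)
  have "(\<integral>\<omega>. lo * ind \<omega> \<partial>M) \<le> (\<integral>\<omega>. S \<omega> * ind \<omega> \<partial>M)"
    by (intro integral_mono ind S_ind integrable_mult_right bin)
  then have "lo * measure M N \<le> c * measure M N" using c int_ind by simp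
  then show "lo \<le> bin_mean M A S" using p unfolding c_def by (rule mult_right_le_imp_le)
  have "(\<integral>\<omega>. S \<omega> * ind \<omega> \<partial>M) \<le> (\<integral>\<omega>. hi * ind \<omega> \<partial>M)"
    by (intro integral_mono ind S_ind integrable_mult_right bin)
  then have "c * measure M N \<le> hi * measure M N" using c int_ind by simp
  then show "bin_mean M A S \<le> hi" using p unfolding c_def by (rule mult_right_le_imp_le)
  assume "bin_mean M A S = hi"
  then have "(\<integral>\<omega>. (hi - S \<omega>) * ind \<omega> \<partial>M) = 0"
    using ind S_ind int_ind c by (simp add: left_diff_distrib c_def)
  moreover have "AE \<omega> in M. 0 \<le> (hi - S \<omega>) * ind \<omega>"
    using bin(2) by (intro AE_I2) (simp add: left_diff_distrib)
  ultimately have "AE \<omega> in M. (hi - S \<omega>) * ind \<omega> = 0"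
    using ind S_ind by (subst (asm) integral_nonneg_eq_0_iff_AE) (auto simp: left_diff_distrib)
  then show "AE \<omega> in M. S \<omega> \<in> A \<longrightarrow> S \<omega> = hi"
    by eventually_elim (auto simp: ind_def indicator_def)
qed

lemma (in finite_measure) bin_mean_bounds:
  assumes S: "S \<in> borel_measurable M" and A: "A \<in> sets borel" "A \<subseteq> {lo..hi}"
  shows "AE \<omega> in M. S \<omega> \<in> A \<longrightarrow>
    lo \<le> bin_mean M A S \<and> bin_mean M A S \<le> hi \<and> (bin_mean M A S = hi \<longrightarrow> S \<omega> = hi)"
proof (cases "measure M {\<omega>\<in>space M. S \<omega> \<in> A} = 0")
  case True
  moreover have "{\<omega>\<in>space M. S \<omega> \<in> A} \<in> sets M" using S A(1) by measurable
  ultimately have "{\<omega>\<in>space M. S \<omega> \<in> A} \<in> null_sets M"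
    by (simp add: emeasure_eq_measure null_setsI)
  from AE_not_in[OF this] AE_space show ?thesis by eventually_elim auto
next
  case False
  note hull = bin_mean_in_bin_hull[OF S A False]
  show ?thesis
  proof (cases "bin_mean M A S = hi")
    case True
    from hull(3)[OF True] show ?thesis by eventually_elim (use hull(1,2) in auto)
  qed (use hull(1,2) in auto)
qed

lemma measurable_binned_vimage_algebra:
  assumes "S \<in> borel_measurable M" and "\<forall>j<J. B j \<in> sets borel"
  shows "binned M J B S \<in> borel_measurable (vimage_algebra (space M) S borel)"
proof -
  define h where "h x = (\<Sum>j<J. indicator (B j) x * bin_mean M (B j) S)" for x
  have "h \<in> borel_measurable borel" unfolding h_def using assms(2)
    by (intro borel_measurable_sum borel_measurable_times borel_measurable_indicator) auto
  then have "(\<lambda>\<omega>. h (S \<omega>)) \<in> borel_measurable (vimage_algebra (space M) S borel)"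
    by (intro measurable_compose[OF measurable_vimage_algebra1]) simp_all
  then show ?thesis unfolding binned_eq_sum_bin_mean h_def .
qed

text \<open>\<lfloor>J c\<rfloor> / J is the left end of the cell [j/J, (j+1)/J] containing the bin mean c, except
  when c is the right end itself; this is harmless because S then sits a.e. on that end.\<close>

lemma floor_grid_bracket:
  fixes J j :: nat and c s :: real
  assumes "J > 0"
    and c: "real j / real J \<le> c" "c \<le> real (Suc j) / real J"
    and s: "real j / real J \<le> s" "s \<le> real (Suc j) / real J"
    and c_upper: "c = real (Suc j) / real J \<Longrightarrow> s = real (Suc j) / real J"
  shows "\<lfloor>real J * c\<rfloor> / real J \<le> s \<and> s \<le> \<lfloor>real J * c\<rfloor> / real J + 1 / real J"
proof (cases "c = real (Suc j) / real J")
  case True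
  then have "\<lfloor>real J * c\<rfloor> = Suc j" using \<open>J > 0\<close> by simp
  then show ?thesis using True c_upper by simp
next
  case False
  then have "real j \<le> real J * c" "real J * c < real j + 1"
    using c \<open>J > 0\<close> by (simp_all add: field_simps)
  then have "\<lfloor>real J * c\<rfloor> = j" by (simp add: floor_eq_iff)
  then show ?thesis using s by (simp add: add_divide_distrib)
qed

lemma (in finite_measure) equal_width_bins_bracket:
  assumes S: "S \<in> borel_measurable M"
    and bins: "\<forall>j<J. B j \<in> sets borel" "\<forall>j<J. B j \<subseteq> {real j / real J .. real (Suc j) / real J}"
    and disjoint: "\<forall>i<J. \<forall>j<J. i \<noteq> j \<longrightarrow> B i \<inter> B j = {}"
    and cover: "\<forall>\<omega>\<in>space M. S \<omega> \<in> (\<Union>j<J. B j)"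
  obtains a where "a \<in> borel_measurable (gen_sigma M (binned M J B S))"
    and "AE \<omega> in M. a \<omega> \<le> S \<omega> \<and> S \<omega> \<le> a \<omega> + 1 / real J"
proof
  define SB where "SB = binned M J B S"
  have "SB \<in> borel_measurable (gen_sigma M SB)"
    unfolding gen_sigma_def by (rule measurable_vimage_algebra1) simp
  then show "(\<lambda>\<omega>. \<lfloor>real J * SB \<omega>\<rfloor> / real J) \<in> borel_measurable (gen_sigma M (binned M J B S))"
    unfolding SB_def[symmetric] by measurable
  have "AE \<omega> in M. \<forall>j\<in>{..<J}. S \<omega> \<in> B j \<longrightarrow> real j / real J \<le> bin_mean M (B j) S
      \<and> bin_mean M (B j) S \<le> real (Suc j) / real J
      \<and> (bin_mean M (B j) S = real (Suc j) / real J \<longrightarrow> S \<omega> = real (Suc j) / real J)"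
    using bins by (subst AE_finite_all) (auto intro: bin_mean_bounds[OF S])
  then show "AE \<omega> in M. \<lfloor>real J * SB \<omega>\<rfloor> / real J \<le> S \<omega>
      \<and> S \<omega> \<le> \<lfloor>real J * SB \<omega>\<rfloor> / real J + 1 / real J"
    using AE_space
  proof eventually_elim
    case (elim \<omega>)
    then obtain j where j: "j < J" "S \<omega> \<in> B j" using cover by blast
    then have "SB \<omega> = bin_mean M (B j) S"
      unfolding SB_def using disjoint by (intro binned_eq_bin_mean)
    moreover have "S \<omega> \<in> {real j / real J .. real (Suc j) / real J}" using bins(2) j by blast
    ultimately show ?case using elim j by (intro floor_grid_bracket[of J j]) auto
  qed
qed

theorem theorem2:
  fixes M :: "'a measure" and MX :: "'x measure" and X :: "'a \<Rightarrow> 'x"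
    and Y :: "'a \<Rightarrow> nat" and f :: "'x \<Rightarrow> real"
    and J :: nat and B :: "nat \<Rightarrow> real set"
  assumes "prob_space M"
    and "X \<in> measurable M MX"
    and "Y \<in> measurable M (count_space UNIV)"
    and "\<forall>\<omega>\<in>space M. Y \<omega> \<in> {0, 1}"
    and "f \<in> borel_measurable MX"
    and "\<forall>x\<in>space MX. f x \<in> {0..1}"
    and "\<forall>j<J. is_interval (B j)"
    and "\<forall>i<J. \<forall>j<J. i \<noteq> j \<longrightarrow> B i \<inter> B j = {}"
    and "(\<Union>j<J. B j) = {0..1}"
  shows "let S = (\<lambda>\<omega>. f (X \<omega>));
             Q = post_Q M MX X Y;
             C = calib_C M S Q;
             FB = gen_sigma M (binned M J B S);
             CB = real_cond_exp M FB Q;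
             CL = - (\<integral>\<omega>. cond_var M FB (\<lambda>\<omega>. S \<omega> - C \<omega>) \<omega> \<partial>M);
             GL = (\<integral>\<omega>. cond_var M FB C \<omega> \<partial>M)
         in CL + GL = (\<integral>\<omega>. 2 * cond_cov M FB S C \<omega> - cond_var M FB S \<omega> \<partial>M)
          \<and> - (\<integral>\<omega>. sqrt (cond_var M FB S \<omega>) *
                (2 * sqrt (cond_var M FB C \<omega>) + sqrt (cond_var M FB S \<omega>)) \<partial>M) \<le> CL + GL
          \<and> CL + GL \<le> (\<integral>\<omega>. sqrt (cond_var M FB S \<omega>) *
                (2 * sqrt (cond_var M FB C \<omega>) - sqrt (cond_var M FB S \<omega>)) \<partial>M)
          \<and> ((\<forall>j<J. closure (B j) = {real j / real J .. real (Suc j) / real J}) \<longrightarrow>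
               - (1 / real J) * (\<integral>\<omega>. sqrt (CB \<omega> * (1 - CB \<omega>)) \<partial>M) - 1 / (4 * (real J)\<^sup>2)
                  \<le> CL + GL
               \<and> CL + GL \<le> (1 / real J) * (\<integral>\<omega>. sqrt (CB \<omega> * (1 - CB \<omega>)) \<partial>M))"
proof -
  interpret prob_space M by fact
  define S where "S \<omega> = f (X \<omega>)" for \<omega>
  define Q where "Q = post_Q M MX X Y"
  define C where "C = calib_C M S Q"
  define FB where "FB = gen_sigma M (binned M J B S)"
  define CB where "CB = real_cond_exp M FB Q"
  have S: "S \<in> borel_measurable M" "\<forall>\<omega>\<in>space M. S \<omega> \<in> {0..1}"
    using assms(2,5,6) measurable_space[OF assms(2)] unfolding S_def by auto
  have B_borel: "\<forall>j<J. B j \<in> sets borel"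
    using assms(7) by (auto intro: real_interval_borel_measurable)
  have SB: "binned M J B S \<in> borel_measurable (vimage_algebra (space M) S borel)"
    using S(1) B_borel by (rule measurable_binned_vimage_algebra)
  interpret QX: finite_measure_subalgebra M "vimage_algebra (space M) X MX"
    using assms(2) by (rule finite_measure_subalgebra_vimage_algebra)
  interpret CS: finite_measure_subalgebra M "vimage_algebra (space M) S borel"
    using S(1) by (rule finite_measure_subalgebra_vimage_algebra)
  interpret FB: finite_measure_subalgebra M FB
    unfolding FB_def gen_sigma_def using measurable_from_subalg[OF CS.subalg SB]
    by (rule finite_measure_subalgebra_vimage_algebra)
  have Q: "bounded_rv M Q" "AE \<omega> in M. Q \<omega> \<in> {0..1}"
    unfolding Q_def post_Q_def using assms(3) by (intro QX.real_cond_exp_unit_interval; simp)+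
  have C: "bounded_rv M C" "AE \<omega> in M. C \<omega> \<in> {0..1}"
    unfolding C_def calib_C_def
    by (rule CS.real_cond_exp_unit_interval[OF bounded_rv_borel_measurable[OF Q(1)] Q(2)])+
  have tower: "AE \<omega> in M. real_cond_exp M FB C \<omega> = CB \<omega>"
  proof -
    have "subalgebra (vimage_algebra (space M) S borel) FB"
      using subalgebra_vimage_algebra[OF SB] by (simp add: FB_def gen_sigma_def)
    then show ?thesis unfolding C_def calib_C_def CB_def
      using CS.subalg integrable_bounded_rv[OF Q(1)] by (intro FB.real_cond_exp_nested_subalg)
  qed
  have S_bounded: "bounded_rv M S" using S by (intro bounded_rv_unit_interval) auto
  note decomposition = FB.integral_cond_var_diff[OF S_bounded C(1)]
  note bounds = FB.integral_two_cond_cov_minus_cond_var_bounds[OF S_bounded C(1)]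
  have equal_width: "- (1 / real J) * (\<integral>\<omega>. sqrt (CB \<omega> * (1 - CB \<omega>)) \<partial>M) - 1 / (4 * (real J)\<^sup>2)
      \<le> (\<integral>\<omega>. 2 * cond_cov M FB S C \<omega> - cond_var M FB S \<omega> \<partial>M)
    \<and> (\<integral>\<omega>. 2 * cond_cov M FB S C \<omega> - cond_var M FB S \<omega> \<partial>M)
      \<le> (1 / real J) * (\<integral>\<omega>. sqrt (CB \<omega> * (1 - CB \<omega>)) \<partial>M)"
    if "\<forall>j<J. closure (B j) = {real j / real J .. real (Suc j) / real J}"
  proof -
    have "\<forall>j<J. B j \<subseteq> {real j / real J .. real (Suc j) / real J}"
      using that closure_subset by blast
    then obtain a where "a \<in> borel_measurable FB"
      and "AE \<omega> in M. a \<omega> \<le> S \<omega> \<and> S \<omega> \<le> a \<omega> + 1 / real J"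
      using equal_width_bins_bracket[OF S(1) B_borel _ assms(8)] S(2) assms(9)
      unfolding FB_def by blast
    from FB.integral_two_cond_cov_minus_cond_var_bracketed[OF assms(1) S_bounded this _ _ C(2) _ tower]
      C(1) show ?thesis by (simp add: power_divide bounded_rv_borel_measurable CB_def)
  qed
  show ?thesis
    using decomposition bounds equal_width
    unfolding Let_def S_def[symmetric] Q_def[symmetric] C_def[symmetric] FB_def[symmetric]
      CB_def[symmetric] by simp
qed

end
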